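(* Let $\{X_n\}_{n\in\mathbb N}$ be a sequence of finite metric spaces with $|X_n|\to\infty$ as $n\to\infty$. Let $X=\bigsqcup_{n\in\mathbb N}X_n$ be a coarse disjoint union, and let $P_X$ be the averaging projection of the sequence. Then the following are equivalent: (1) $P_X$ is quasi-local; (2) for any $\alpha\in(0,\tfrac12]$ and any $c\in(0,1)$, there exists $R>0$ such that for any $n\in\mathbb N$ and $A\subseteq X_n$ with $\alpha|X_n|\leq|A|\leq|X_n|/2$, we have $|\partial_RA|>c|A|$; (3) for any $\alpha\in(0,\tfrac12]$, there exist $c\in(0,1)$ and $R>0$ such that for any $n\in\mathbb N$ and $A\subseteq X_n$ with $\alpha|X_n|\leq|A|\leq|X_n|/2$, we have $|\partial_RA|>c|A|$.
   Context: A coarse disjoint union of finite metric spaces $(X_n,d_n)$ is the set $X=\bigsqcup_n X_n$ with a metric $d$ that restricts to $d_n$ on each $X_n$ and satisfies $d(X_n,X_m)\to\infty$ as $n+m\to\infty$ with $m\neq n$. For a finite subset $F$ of a set $Y$, $P_F\in\mathfrak B(\ell^2(Y))$ is the orthogonal projection onto the span of $\chi_F$, i.e. $(P_F)_{x,y}=1/|F|$ if $x,y\in F$ and $0$ otherwise; the averaging projection of the sequence is $P_X=\sum_nP_{X_n}$ (strong operator topology sum) on $\ell^2(X)$. For $A\subseteq X$, $\chi_A$ also denotes the multiplication operator by its characteristic function. An operator $T\in\mathfrak B(\ell^2(X))$ is quasi-local if for every $\varepsilon>0$ there is $R>0$ such that $\|\chi_AT\chi_B\|\leq\varepsilon$ for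 all $A,B\subseteq X$ with $d(A,B)\geq R$. For $A\subseteq X_n$, $\partial_RA=\{x\in X_n\setminus A: d(x,A)\leq R\}$ is the outer $R$-boundary. *)

theory Defs
  imports "HOL-Analysis.Analysis"
begin

text \<open>Operators on l2(Y) are represented by their matrix kernels K :: Y => Y => complex.
  The operator norm of a (bounded) kernel operator is the supremum of |<f, K g>| over
  finitely supported f, g in the closed unit ball of l2(Y).\<close>
definition kernel_norm :: "('a \<Rightarrow> 'a \<Rightarrow> complex) \<Rightarrow> real" where
  "kernel_norm K = Sup {norm (\<Sum>x\<in>F. \<Sum>y\<in>F. cnj (f x) * K x y * g y) | F f g.
       finite F \<and> (\<Sum>x\<in>F. (cmod (f x))\<^sup>2) \<le> 1 \<and> (\<Sum>x\<in>F. (cmod (g x))\<^sup>2) \<le> 1}"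

text \<open>Kernel of chi_A T chi_B.\<close>
definition cut_kernel :: "'a set \<Rightarrow> ('a \<Rightarrow> 'a \<Rightarrow> complex) \<Rightarrow> 'a set \<Rightarrow> 'a \<Rightarrow> 'a \<Rightarrow> complex" where
  "cut_kernel A K B = (\<lambda>x y. if x \<in> A \<and> y \<in> B then K x y else 0)"

definition quasi_local :: "('a::metric_space \<Rightarrow> 'a \<Rightarrow> complex) \<Rightarrow> bool" where
  "quasi_local K \<longleftrightarrow> (\<forall>\<epsilon>>0. \<exists>R>0. \<forall>A B. setdist A B \<ge> R \<longrightarrow> kernel_norm (cut_kernel A K B) \<le> \<epsilon>)"

text \<open>Kernel of the projection P_F onto span of chi_F.\<close>
definition proj_kernel :: "'a set \<Rightarrow> 'a \<Rightarrow> 'a \<Rightarrow> complex" where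
  "proj_kernel F x y = (if x \<in> F \<and> y \<in> F then 1 / of_nat (card F) else 0)"

text \<open>Kernel of the averaging projection P_X = sum_n P_{X_n} (SOT sum, entrywise).\<close>
definition avg_proj_kernel :: "(nat \<Rightarrow> 'a set) \<Rightarrow> 'a \<Rightarrow> 'a \<Rightarrow> complex" where
  "avg_proj_kernel Xs x y = (\<Sum>n. proj_kernel (Xs n) x y)"

definition outer_boundary :: "'a::metric_space set \<Rightarrow> real \<Rightarrow> 'a set \<Rightarrow> 'a set" where
  "outer_boundary Y R A = {x \<in> Y - A. infdist x A \<le> R}"

definition coarse_disjoint_union :: "(nat \<Rightarrow> 'a::metric_space set) \<Rightarrow> bool" where
  "coarse_disjoint_union Xs \<longleftrightarrow>
     (\<forall>n. finite (Xs n) \<and> Xs n \<noteq> {}) \<and>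
     (\<forall>n m. n \<noteq> m \<longrightarrow> Xs n \<inter> Xs m = {}) \<and>
     (\<Union>n. Xs n) = UNIV \<and>
     (\<forall>R. \<exists>N. \<forall>n m. n \<noteq> m \<and> n + m \<ge> N \<longrightarrow> setdist (Xs n) (Xs m) \<ge> R)"

end

theory Submission
  imports Defs
begin

text \<open>
  The averaging projection is block diagonal, its block on \<open>X\<^sub>n\<close> being the rank-one
  projection onto the constants, so the norm of \<open>\<chi>\<^sub>A P\<^sub>X \<chi>\<^sub>B\<close> is
  \<open>sup\<^sub>n sqrt(|A \<inter> X\<^sub>n| |B \<inter> X\<^sub>n|) / |X\<^sub>n|\<close>: a weighted Schur test gives the upper bound,
  normalised indicator vectors the lower one. Quasi-locality therefore says that for every
  \<open>\<epsilon>\<close> there is an \<open>R\<close> such that \<open>R\<close>-separated subsets \<open>A, B\<close> of a single block satisfy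
  \<open>|A| |B| \<le> \<epsilon>\<^sup>2 |X\<^sub>n|\<^sup>2\<close>.

  If \<open>\<alpha>|X\<^sub>n| \<le> |A| \<le> |X\<^sub>n|/2\<close>, then \<open>X\<^sub>n\<close> is the disjoint union of \<open>A\<close>, \<open>\<partial>\<^sub>R A\<close> and the
  points \<open>R\<close>-far from \<open>A\<close>; with \<open>\<epsilon>\<^sup>2 = \<alpha>(1 - c)/4\<close> the far points make up at most a
  fraction \<open>(1 - c)/4\<close> of \<open>X\<^sub>n\<close>, which forces \<open>|\<partial>\<^sub>R A| > c|A|\<close>. Conversely, under boundary
  expansion the \<open>kR\<close>-thickening of a set of proportion at least \<open>\<alpha>\<close> grows by a factor
  \<open>1 + c\<close> per step until it covers more than half of \<open>X\<^sub>n\<close>, which it does once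
  \<open>(1 + c)\<^sup>k > 1/\<alpha>\<close>. Two such thickenings meet, so sets of proportion more than
  \<open>\<alpha> \<le> \<epsilon>\<^sup>2\<close> lie within distance \<open>2kR\<close> of each other.

  Since \<open>P\<^sub>X\<close> has no entries between different blocks, neither \<open>|X\<^sub>n| \<rightarrow> \<infinity>\<close> nor the
  separation of the blocks is used.
\<close>

section \<open>Thickenings and boundary expansion\<close>

lemma infdist_attained_finite:
  fixes A :: "'a::metric_space set"
  assumes "finite A" "A \<noteq> {}"
  obtains a where "a \<in> A" "infdist x A = dist x a"
proof -
  have "infdist x A = Min (dist x ` A)"
    using assms by (simp add: infdist_def cInf_eq_Min)
  moreover have "Min (dist x ` A) \<in> dist x ` A"
    using assms by simp
  ultimately show ?thesis
    using that by auto
qed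

lemma setdist_le_setdist_subsets:
  assumes "S \<noteq> {}" "T \<noteq> {}" "S \<subseteq> A" "T \<subseteq> B"
  shows "setdist A B \<le> setdist S T"
  using assms setdist_subset_left[of S A B] setdist_subset_right[of T B S] by linarith

lemma le_setdist_if_le_infdist:
  assumes "A \<noteq> {}" "B \<noteq> {}" "\<And>y. y \<in> B \<Longrightarrow> R \<le> infdist y A"
  shows "R \<le> setdist A B"
proof -
  have "R \<le> dist x y" if "x \<in> A" "y \<in> B" for x y
    using assms(3)[OF \<open>y \<in> B\<close>] infdist_le[OF \<open>x \<in> A\<close>, of y] by (simp add: dist_commute)
  then show ?thesis
    using assms(1,2) by (simp add: le_setdist_iff)
qed

lemma card_add_card_le_if_disjoint:
  assumes "finite Y" "S \<subseteq> Y" "T \<subseteq> Y" "S \<inter> T = {}"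
  shows "card S + card T \<le> card Y"
proof -
  have "card S + card T = card (S \<union> T)"
    using assms by (intro card_Un_disjoint[symmetric]) (auto intro: finite_subset)
  also have "\<dots> \<le> card Y"
    using assms by (intro card_mono) auto
  finally show ?thesis .
qed

definition thickening :: "'a::metric_space set \<Rightarrow> real \<Rightarrow> 'a set \<Rightarrow> 'a set" where
  "thickening Y r A = {x \<in> Y. infdist x A \<le> r}"

definition boundary_expanding :: "'a::metric_space set \<Rightarrow> real \<Rightarrow> real \<Rightarrow> real \<Rightarrow> bool" where
  "boundary_expanding Y \<alpha> c R \<longleftrightarrow>
     (\<forall>A. A \<subseteq> Y \<and> \<alpha> * real (card Y) \<le> real (card A) \<and> real (card A) \<le> real (card Y) / 2
        \<longrightarrow> real (card (outer_boundary Y R A)) > c * real (card A))"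

lemma subset_thickening: "A \<subseteq> Y \<Longrightarrow> 0 \<le> r \<Longrightarrow> A \<subseteq> thickening Y r A"
  by (auto simp: thickening_def)

lemma thickening_mono: "r \<le> s \<Longrightarrow> thickening Y r A \<subseteq> thickening Y s A"
  by (auto simp: thickening_def)

lemma outer_boundary_thickening_subset:
  assumes "finite Y" "A \<subseteq> Y" "A \<noteq> {}" "0 \<le> r"
  shows "outer_boundary Y s (thickening Y r A) \<subseteq> thickening Y (r + s) A"
proof
  fix x
  assume x: "x \<in> outer_boundary Y s (thickening Y r A)"
  have "finite (thickening Y r A)" "thickening Y r A \<noteq> {}"
    using assms subset_thickening[of A Y r] by (auto simp: thickening_def)
  then obtain y where y: "y \<in> thickening Y r A" "infdist x (thickening Y r A) = dist x y"
    by (rule infdist_attained_finite)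
  have "infdist x A \<le> infdist y A + dist x y"
    by (rule infdist_triangle)
  also have "\<dots> \<le> r + s"
    using x y by (intro add_mono) (auto simp: thickening_def outer_boundary_def)
  finally show "x \<in> thickening Y (r + s) A"
    using x by (auto simp: thickening_def outer_boundary_def)
qed

lemma card_thickening_add_outer_boundary_le:
  assumes "finite Y" "A \<subseteq> Y" "A \<noteq> {}" "0 \<le> r" "0 \<le> s"
  shows "card (thickening Y r A) + card (outer_boundary Y s (thickening Y r A))
    \<le> card (thickening Y (r + s) A)"
proof (rule card_add_card_le_if_disjoint)
  show "finite (thickening Y (r + s) A)"
    using assms(1) by (simp add: thickening_def)
  show "thickening Y r A \<subseteq> thickening Y (r + s) A"
    using assms(5) by (intro thickening_mono) simp
  show "outer_boundary Y s (thickening Y r A) \<subseteq> thickening Y (r + s) A"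
    using assms(1-4) by (rule outer_boundary_thickening_subset)
  show "thickening Y r A \<inter> outer_boundary Y s (thickening Y r A) = {}"
    by (auto simp: outer_boundary_def)
qed

lemma card_thickening_growth:
  assumes Y: "finite Y" and A: "A \<subseteq> Y" "A \<noteq> {}" and R: "0 \<le> R" and c: "0 < c"
    and large: "\<alpha> * real (card Y) \<le> real (card A)"
    and expanding: "boundary_expanding Y \<alpha> c R"
  shows "real (card Y) / 2 < real (card (thickening Y (real k * R) A))
    \<or> (1 + c) ^ k * real (card A) \<le> real (card (thickening Y (real k * R) A))"
proof (induction k)
  case 0
  have "card A \<le> card (thickening Y (real 0 * R) A)"
    using A Y subset_thickening[of A Y 0] by (intro card_mono) (auto simp: thickening_def)
  then show ?case
    by simp
next
  case (Suc k)
  define T where "T = thickening Y (real k * R) A"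
  have T_sub: "T \<subseteq> Y"
    by (auto simp: T_def thickening_def)
  have "card A \<le> card T"
    using A Y R subset_thickening[of A Y "real k * R"] T_sub
    by (intro card_mono) (auto simp: T_def intro: finite_subset)
  have grow: "card T + card (outer_boundary Y R T) \<le> card (thickening Y (real (Suc k) * R) A)"
    using card_thickening_add_outer_boundary_le[OF Y A, of "real k * R" R] R
    by (simp add: T_def algebra_simps)
  show ?case
  proof (cases "real (card Y) / 2 < real (card T)")
    case True
    then show ?thesis
      using grow by simp
  next
    case False
    then have IH: "(1 + c) ^ k * real (card A) \<le> real (card T)"
      using Suc.IH by (simp add: T_def)
    have "c * real (card T) < real (card (outer_boundary Y R T))"
      using expanding False large T_sub \<open>card A \<le> card T\<close>
      unfolding boundary_expanding_def by force
    then have "(1 + c) * real (card T) \<le> real (card (thickening Y (real (Suc k) * R) A))"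
      using grow by (simp add: algebra_simps)
    moreover have "(1 + c) ^ Suc k * real (card A) \<le> (1 + c) * real (card T)"
      using IH c by simp
    ultimately show ?thesis
      by simp
  qed
qed

lemma card_thickening_gt_half:
  assumes "finite Y" "A \<subseteq> Y" "A \<noteq> {}" "0 \<le> R" "0 < c" "0 < \<alpha>"
    and large: "\<alpha> * real (card Y) \<le> real (card A)"
    and expanding: "boundary_expanding Y \<alpha> c R"
    and k: "1 / \<alpha> < (1 + c) ^ k"
  shows "real (card Y) / 2 < real (card (thickening Y (real k * R) A))"
proof -
  have "0 < real (card Y)"
    using assms(1-3) by (auto simp: card_gt_0_iff)
  moreover have "1 < (1 + c) ^ k * \<alpha>"
    using k \<open>0 < \<alpha>\<close> by (simp add: field_simps)
  ultimately have "real (card Y) < (1 + c) ^ k * \<alpha> * real (card Y)"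
    by simp
  also have "\<dots> \<le> (1 + c) ^ k * real (card A)"
    using large \<open>0 < c\<close> by (simp add: mult.assoc)
  finally have "real (card Y) < (1 + c) ^ k * real (card A)" .
  moreover have "card (thickening Y (real k * R) A) \<le> card Y"
    using assms(1) by (intro card_mono) (auto simp: thickening_def)
  ultimately show ?thesis
    using card_thickening_growth[OF assms(1-5) large expanding, of k] by linarith
qed

lemma thickenings_disjoint:
  assumes "finite A" "A \<noteq> {}" "finite B" "B \<noteq> {}" and far: "2 * r < setdist A B"
  shows "thickening Y r A \<inter> thickening Y r B = {}"
proof (rule ccontr)
  assume "thickening Y r A \<inter> thickening Y r B \<noteq> {}"
  then obtain x where x: "infdist x A \<le> r" "infdist x B \<le> r"
    by (auto simp: thickening_def)
  obtain y where y: "y \<in> A" "infdist x A = dist x y"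
    using assms(1,2) by (rule infdist_attained_finite)
  obtain z where z: "z \<in> B" "infdist x B = dist x z"
    using assms(3,4) by (rule infdist_attained_finite)
  have "setdist A B \<le> dist y z"
    using y z by (intro setdist_le_dist)
  also have "\<dots> \<le> dist x y + dist x z"
    by (rule dist_triangle3)
  finally show False
    using x y z far by linarith
qed

lemma card_mult_card_le_if_far_apart:
  assumes Y: "finite Y" and AB: "A \<subseteq> Y" "B \<subseteq> Y"
    and "0 < \<alpha>" "0 < c" "0 \<le> R" and expanding: "boundary_expanding Y \<alpha> c R"
    and k: "1 / \<alpha> < (1 + c) ^ k" and far: "2 * (real k * R) < setdist A B"
  shows "real (card A) * real (card B) \<le> \<alpha> * (real (card Y))\<^sup>2"
proof (rule ccontr)
  define N where "N = real (card Y)"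
  assume "\<not> ?thesis"
  then have prod: "\<alpha> * N * N < real (card A) * real (card B)"
    by (simp add: N_def power2_eq_square mult.assoc)
  have fin: "finite A" "finite B"
    using Y AB finite_subset by auto
  have "real (card A) \<le> N" "real (card B) \<le> N"
    using Y AB by (simp_all add: N_def card_mono)
  then have "real (card A) * real (card B) \<le> real (card A) * N"
    "real (card A) * real (card B) \<le> N * real (card B)"
    by (simp_all add: mult_left_mono mult_right_mono)
  then have "\<alpha> * N * N < real (card A) * N" "\<alpha> * N * N < real (card B) * N"
    using prod by (simp_all add: mult.commute)
  then have large: "\<alpha> * N < real (card A)" "\<alpha> * N < real (card B)"
    by (auto elim: mult_right_less_imp_less simp: N_def)
  moreover have "0 \<le> \<alpha> * N"
    using \<open>0 < \<alpha>\<close> by (simp add: N_def)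
  ultimately have ne: "A \<noteq> {}" "B \<noteq> {}"
    by auto
  have "N / 2 < real (card (thickening Y (real k * R) A))"
       "N / 2 < real (card (thickening Y (real k * R) B))"
    using card_thickening_gt_half[OF Y _ _ \<open>0 \<le> R\<close> \<open>0 < c\<close> \<open>0 < \<alpha>\<close> _ expanding k] AB ne large
    by (auto simp: N_def)
  moreover have "card (thickening Y (real k * R) A) + card (thickening Y (real k * R) B) \<le> card Y"
    using Y thickenings_disjoint[OF fin(1) ne(1) fin(2) ne(2) far]
    by (intro card_add_card_le_if_disjoint) (auto simp: thickening_def)
  ultimately show False
    by (simp add: N_def)
qed

lemma card_partition_outer_boundary:
  assumes "finite Y" "A \<subseteq> Y" "0 \<le> R"
  shows "card Y = card A + card (outer_boundary Y R A) + card {x \<in> Y. R < infdist x A}"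
proof -
  define D where "D = outer_boundary Y R A"
  define F where "F = {x \<in> Y. R < infdist x A}"
  have "Y = A \<union> D \<union> F"
    using assms by (auto simp: D_def F_def outer_boundary_def)
  moreover have "finite A" "finite D" "finite F"
    using assms finite_subset by (auto simp: D_def F_def outer_boundary_def)
  moreover have "A \<inter> D = {}" "(A \<union> D) \<inter> F = {}"
    using assms(3) by (auto simp: D_def F_def outer_boundary_def)
  ultimately have "card Y = card A + card D + card F"
    using card_Un_disjoint[of A D] card_Un_disjoint[of "A \<union> D" F] by simp
  then show ?thesis
    by (simp add: D_def F_def)
qed

lemma boundary_expanding_if_far_sets_small:
  assumes Y: "finite Y" "Y \<noteq> {}" and "0 < \<alpha>" "0 \<le> c" "c < 1" "0 \<le> R"
    and small: "\<And>A B. A \<subseteq> Y \<Longrightarrow> B \<subseteq> Y \<Longrightarrow> R \<le> setdist A B \<Longrightarrow>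
      real (card A) * real (card B) \<le> \<alpha> * (1 - c) / 4 * (real (card Y))\<^sup>2"
  shows "boundary_expanding Y \<alpha> c R"
  unfolding boundary_expanding_def
proof (intro allI impI)
  fix A
  assume A: "A \<subseteq> Y \<and> \<alpha> * real (card Y) \<le> real (card A) \<and> real (card A) \<le> real (card Y) / 2"
  define N where "N = real (card Y)"
  define a where "a = real (card A)"
  define Far where "Far = {x \<in> Y. R < infdist x A}"
  have "0 < N"
    using Y by (simp add: N_def card_gt_0_iff)
  then have "0 < \<alpha> * N"
    using \<open>0 < \<alpha>\<close> by simp
  then have "0 < a"
    using A by (simp add: a_def N_def)
  then have "A \<noteq> {}"
    by (auto simp: a_def)
  have far_small: "real (card Far) \<le> (1 - c) / 4 * N"
  proof (cases "Far = {}")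
    case False
    have "R \<le> setdist A Far"
      using \<open>A \<noteq> {}\<close> False by (intro le_setdist_if_le_infdist) (auto simp: Far_def)
    then have "a * real (card Far) \<le> \<alpha> * (1 - c) / 4 * N\<^sup>2"
      using small[of A Far] A by (simp add: Far_def a_def N_def)
    also have "\<dots> = (\<alpha> * N) * ((1 - c) / 4 * N)"
      by (simp add: power2_eq_square)
    also have "\<dots> \<le> a * ((1 - c) / 4 * N)"
      using A \<open>c < 1\<close> \<open>0 < N\<close> by (intro mult_right_mono) (auto simp: a_def N_def)
    finally show ?thesis
      using \<open>0 < a\<close> by simp
  qed (use \<open>c < 1\<close> \<open>0 < N\<close> in simp)
  have "N = a + real (card (outer_boundary Y R A)) + real (card Far)"
    using card_partition_outer_boundary[OF Y(1), of A R] A \<open>0 \<le> R\<close> by (simp add: N_def a_def Far_def)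
  moreover have "a + c * a \<le> N / 2 + c * N / 2"
    using mult_left_mono[of a "N / 2" "1 + c"] A \<open>0 \<le> c\<close> by (simp add: a_def N_def algebra_simps)
  moreover have "real (card Far) \<le> N / 4 - c * N / 4"
    using far_small by (simp add: algebra_simps)
  moreover have "c * N < N"
    using \<open>c < 1\<close> \<open>0 < N\<close> by simp
  ultimately have "c * a < real (card (outer_boundary Y R A))"
    by linarith
  then show "real (card (outer_boundary Y R A)) > c * real (card A)"
    by (simp add: a_def)
qed

section \<open>Kernel forms and the Schur test\<close>

definition kernel_form ::
    "('a \<Rightarrow> 'a \<Rightarrow> complex) \<Rightarrow> 'a set \<Rightarrow> ('a \<Rightarrow> complex) \<Rightarrow> ('a \<Rightarrow> complex) \<Rightarrow> complex" where
  "kernel_form K F f g = (\<Sum>x\<in>F. \<Sum>y\<in>F. cnj (f x) * K x y * g y)"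

definition in_l2_ball :: "'a set \<Rightarrow> ('a \<Rightarrow> complex) \<Rightarrow> bool" where
  "in_l2_ball F f \<longleftrightarrow> (\<Sum>x\<in>F. (cmod (f x))\<^sup>2) \<le> 1"

lemma kernel_norm_eq_Sup_kernel_form:
  "kernel_norm K =
     Sup {cmod (kernel_form K F f g) | F f g. finite F \<and> in_l2_ball F f \<and> in_l2_ball F g}"
  by (simp add: kernel_norm_def kernel_form_def in_l2_ball_def)

lemma kernel_norm_le:
  assumes "\<And>F f g. finite F \<Longrightarrow> in_l2_ball F f \<Longrightarrow> in_l2_ball F g \<Longrightarrow>
             cmod (kernel_form K F f g) \<le> C"
  shows "kernel_norm K \<le> C"
proof -
  have "in_l2_ball {} (\<lambda>_. 0)"
    by (simp add: in_l2_ball_def)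
  then show ?thesis
    unfolding kernel_norm_eq_Sup_kernel_form using assms
    by (intro cSup_least) blast+
qed

lemma kernel_form_le_kernel_norm:
  assumes "\<And>F f g. finite F \<Longrightarrow> in_l2_ball F f \<Longrightarrow> in_l2_ball F g \<Longrightarrow>
             cmod (kernel_form K F f g) \<le> C"
    and "finite F" "in_l2_ball F f" "in_l2_ball F g"
  shows "cmod (kernel_form K F f g) \<le> kernel_norm K"
  unfolding kernel_norm_eq_Sup_kernel_form using assms
  by (intro cSup_upper bdd_aboveI[of _ C]) blast+

lemma sum_indicator_real: "finite F \<Longrightarrow> (\<Sum>x\<in>F. indicator S x :: real) = real (card (F \<inter> S))"
  by (simp add: indicator_def sum.If_cases Int_def)

lemma in_l2_ball_normalized_indicator:
  assumes "finite F" "S \<subseteq> F" "S \<noteq> {}"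
  shows "in_l2_ball F (\<lambda>x. complex_of_real (indicator S x / sqrt (real (card S))))"
proof -
  have "finite S"
    using assms finite_subset by blast
  then have "0 < real (card S)"
    using assms by (simp add: card_gt_0_iff)
  then have "(cmod (complex_of_real (indicator S x / sqrt (real (card S)))))\<^sup>2
      = indicator S x / real (card S)" for x
    unfolding norm_of_real power2_abs by (simp add: power_divide indicator_def)
  moreover have "(\<Sum>x\<in>F. indicator S x / real (card S)) = real (card S) / real (card S)"
    using assms by (simp add: sum_divide_distrib[symmetric] sum_indicator_real Int_absorb1)
  ultimately show ?thesis
    using \<open>0 < real (card S)\<close> by (simp add: in_l2_ball_def)
qed

lemma mult_le_weighted_squares:
  fixes t u v :: real
  assumes "0 < t"
  shows "u * v \<le> (t * u\<^sup>2 + v\<^sup>2 / t) / 2"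
proof -
  have "0 \<le> (t * u - v)\<^sup>2 / t"
    using assms by simp
  also have "\<dots> = t * u\<^sup>2 - 2 * u * v + v\<^sup>2 / t"
    using assms by (simp add: power2_eq_square field_simps)
  finally show ?thesis
    by simp
qed

lemma sum_sum_weighted_split:
  fixes k :: "'a \<Rightarrow> 'a \<Rightarrow> real" and t u v :: "'a \<Rightarrow> real"
  shows "(\<Sum>x\<in>F. \<Sum>y\<in>F. k x y * ((t x * u x + v y / t x) / 2))
    = ((\<Sum>x\<in>F. u x * (t x * (\<Sum>y\<in>F. k x y))) + (\<Sum>y\<in>F. v y * (\<Sum>x\<in>F. k x y / t x))) / 2"
proof -
  have "k x y * ((t x * u x + v y / t x) / 2) = (k x y * (t x * u x) + k x y / t x * v y) / 2" for x y
    by (simp add: algebra_simps)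
  then have "(\<Sum>x\<in>F. \<Sum>y\<in>F. k x y * ((t x * u x + v y / t x) / 2))
      = ((\<Sum>x\<in>F. \<Sum>y\<in>F. k x y * (t x * u x)) + (\<Sum>x\<in>F. \<Sum>y\<in>F. k x y / t x * v y)) / 2"
    by (simp only: sum_divide_distrib[symmetric] sum.distrib)
  also have "(\<Sum>x\<in>F. \<Sum>y\<in>F. k x y / t x * v y) = (\<Sum>y\<in>F. v y * (\<Sum>x\<in>F. k x y / t x))"
    by (subst sum.swap) (simp add: sum_distrib_left mult_ac)
  also have "(\<Sum>x\<in>F. \<Sum>y\<in>F. k x y * (t x * u x)) = (\<Sum>x\<in>F. u x * (t x * (\<Sum>y\<in>F. k x y)))"
    by (simp add: sum_distrib_left sum_distrib_right mult_ac)
  finally show ?thesis .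
qed

lemma kernel_form_schur_test:
  fixes K :: "'a \<Rightarrow> 'a \<Rightarrow> complex" and t :: "'a \<Rightarrow> real"
  assumes t: "\<And>x. 0 < t x"
    and rows: "\<And>x. t x * (\<Sum>y\<in>F. cmod (K x y)) \<le> C"
    and cols: "\<And>y. (\<Sum>x\<in>F. cmod (K x y) / t x) \<le> C"
    and f: "in_l2_ball F f" and g: "in_l2_ball F g"
  shows "cmod (kernel_form K F f g) \<le> C"
proof -
  have "0 \<le> t x * (\<Sum>y\<in>F. cmod (K x y))" for x
    using t[of x] by (intro mult_nonneg_nonneg sum_nonneg) auto
  then have C: "0 \<le> C"
    using rows order_trans by blast
  have "cmod (kernel_form K F f g) \<le> (\<Sum>x\<in>F. \<Sum>y\<in>F. cmod (K x y) * (cmod (f x) * cmod (g y)))"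
    unfolding kernel_form_def
    by (rule order_trans[OF norm_sum sum_mono[OF order_trans[OF norm_sum sum_mono]]])
       (simp add: norm_mult)
  also have "\<dots> \<le> (\<Sum>x\<in>F. \<Sum>y\<in>F.
      cmod (K x y) * ((t x * (cmod (f x))\<^sup>2 + (cmod (g y))\<^sup>2 / t x) / 2))"
    using t by (intro sum_mono mult_left_mono mult_le_weighted_squares) auto
  also have "\<dots> = ((\<Sum>x\<in>F. (cmod (f x))\<^sup>2 * (t x * (\<Sum>y\<in>F. cmod (K x y))))
      + (\<Sum>y\<in>F. (cmod (g y))\<^sup>2 * (\<Sum>x\<in>F. cmod (K x y) / t x))) / 2"
    by (rule sum_sum_weighted_split)
  also have "\<dots> \<le> ((\<Sum>x\<in>F. (cmod (f x))\<^sup>2 * C) + (\<Sum>y\<in>F. (cmod (g y))\<^sup>2 * C)) / 2"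
    using rows cols by (intro divide_right_mono add_mono sum_mono mult_left_mono) auto
  also have "\<dots> \<le> (C + C) / 2"
    using f g C unfolding in_l2_ball_def sum_distrib_right[symmetric]
    by (intro divide_right_mono add_mono mult_left_le_one_le sum_nonneg) auto
  finally show ?thesis
    by simp
qed

section \<open>The averaging projection of a partition into finite blocks\<close>

lemma avg_proj_kernel_commute: "avg_proj_kernel Xs x y = avg_proj_kernel Xs y x"
  by (simp add: avg_proj_kernel_def proj_kernel_def conj_commute)

lemma cut_avg_proj_kernel_commute:
  "cut_kernel A (avg_proj_kernel Xs) B x y = cut_kernel B (avg_proj_kernel Xs) A y x"
  using avg_proj_kernel_commute[of Xs x y] by (simp add: cut_kernel_def conj_commute)

locale finite_block_partition =
  fixes Xs :: "nat \<Rightarrow> 'a::metric_space set"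
  assumes finite_block: "finite (Xs n)"
    and block_nonempty: "Xs n \<noteq> {}"
    and blocks_disjoint: "n \<noteq> m \<Longrightarrow> Xs n \<inter> Xs m = {}"
    and blocks_cover: "\<exists>n. x \<in> Xs n"
begin

definition block :: "'a \<Rightarrow> nat" where
  "block x = (THE n. x \<in> Xs n)"

lemma block_eq: "x \<in> Xs n \<Longrightarrow> block x = n"
  unfolding block_def using blocks_disjoint by (intro the_equality) auto

lemma in_block_iff: "x \<in> Xs n \<longleftrightarrow> block x = n"
  using block_eq blocks_cover by metis

lemma card_block_pos: "0 < card (Xs n)"
  using finite_block block_nonempty by (simp add: card_gt_0_iff)

lemma avg_proj_kernel_eq:
  "avg_proj_kernel Xs x y = (if block y = block x then 1 / of_nat (card (Xs (block x))) else 0)"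
proof -
  have "(\<lambda>n. proj_kernel (Xs n) x y) =
      (\<lambda>n. if n = block x then (if block y = block x then 1 / of_nat (card (Xs (block x))) else 0) else 0)"
    by (auto simp: proj_kernel_def in_block_iff)
  then show ?thesis
    unfolding avg_proj_kernel_def by (simp add: sums_unique[OF sums_single, symmetric])
qed

lemma row_sum_cut_avg_proj_kernel_le:
  "(\<Sum>y\<in>F. cmod (cut_kernel A (avg_proj_kernel Xs) B x y))
     \<le> (if x \<in> A then real (card (B \<inter> Xs (block x))) / real (card (Xs (block x))) else 0)"
proof (cases "x \<in> A \<and> finite F")
  case True
  have "(\<Sum>y\<in>F. cmod (cut_kernel A (avg_proj_kernel Xs) B x y))
      = (\<Sum>y\<in>F. indicator (B \<inter> Xs (block x)) y) / real (card (Xs (block x)))"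
    unfolding sum_divide_distrib using True
    by (intro sum.cong) (auto simp: cut_kernel_def avg_proj_kernel_eq in_block_iff norm_divide)
  also have "\<dots> = real (card (F \<inter> (B \<inter> Xs (block x)))) / real (card (Xs (block x)))"
    using True by (simp add: indicator_def sum.If_cases Int_def)
  also have "\<dots> \<le> real (card (B \<inter> Xs (block x))) / real (card (Xs (block x)))"
    using finite_block by (intro divide_right_mono) (auto intro: card_mono)
  finally show ?thesis
    using True by simp
next
  case False
  then show ?thesis
    by (auto simp: cut_kernel_def)
qed

lemma col_sum_cut_avg_proj_kernel_le:
  "(\<Sum>x\<in>F. cmod (cut_kernel A (avg_proj_kernel Xs) B x y))
     \<le> (if y \<in> B then real (card (A \<inter> Xs (block y))) / real (card (Xs (block y))) else 0)"
  using row_sum_cut_avg_proj_kernel_le[of B A y F] by (simp add: cut_avg_proj_kernel_commute[of A Xs B])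

lemma cut_avg_proj_kernel_eq_0: "block x \<noteq> block y \<Longrightarrow> cut_kernel A (avg_proj_kernel Xs) B x y = 0"
  by (simp add: cut_kernel_def avg_proj_kernel_eq)

text \<open>With this weight on the rows both Schur sums of the cut kernel are at most \<open>e\<close>;
  \<open>max 1\<close> keeps it positive on blocks that miss \<open>B\<close>.\<close>

definition schur_weight :: "real \<Rightarrow> 'a set \<Rightarrow> 'a \<Rightarrow> real" where
  "schur_weight e B x = e * real (card (Xs (block x))) / max 1 (real (card (B \<inter> Xs (block x))))"

lemma schur_weight_pos: "0 < e \<Longrightarrow> 0 < schur_weight e B x"
  using card_block_pos by (simp add: schur_weight_def)

lemma schur_weight_mult_row_sum_le:
  assumes "0 < e"
  shows "schur_weight e B x * (\<Sum>y\<in>F. cmod (cut_kernel A (avg_proj_kernel Xs) B x y)) \<le> e"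
proof -
  define N where "N = real (card (Xs (block x)))"
  define b where "b = real (card (B \<inter> Xs (block x)))"
  have "0 < N"
    using card_block_pos by (simp add: N_def)
  have "schur_weight e B x * (\<Sum>y\<in>F. cmod (cut_kernel A (avg_proj_kernel Xs) B x y))
      \<le> schur_weight e B x * (b / N)"
    using row_sum_cut_avg_proj_kernel_le[of A B x F] schur_weight_pos[OF assms, of B x]
    by (intro mult_left_mono) (auto simp: b_def N_def split: if_splits intro: order_trans[of _ 0])
  also have "\<dots> = e * (b / max 1 b)"
    using \<open>0 < N\<close> by (simp add: schur_weight_def N_def b_def)
  also have "\<dots> \<le> e"
    using assms by (intro mult_left_le) (auto simp: b_def)
  finally show ?thesis .
qed

lemma col_sum_div_schur_weight_le:
  assumes "0 < e"
    and small: "real (card (A \<inter> Xs (block y))) * real (card (B \<inter> Xs (block y)))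
      \<le> (e * real (card (Xs (block y))))\<^sup>2"
  shows "(\<Sum>x\<in>F. cmod (cut_kernel A (avg_proj_kernel Xs) B x y) / schur_weight e B x) \<le> e"
proof -
  define N where "N = real (card (Xs (block y)))"
  define a where "a = real (card (A \<inter> Xs (block y)))"
  define b where "b = real (card (B \<inter> Xs (block y)))"
  have "0 < N"
    using card_block_pos by (simp add: N_def)
  have same_weight: "cmod (cut_kernel A (avg_proj_kernel Xs) B x y) / schur_weight e B x
      = cmod (cut_kernel A (avg_proj_kernel Xs) B x y) / schur_weight e B y" for x
    by (cases "block x = block y") (simp_all add: schur_weight_def cut_avg_proj_kernel_eq_0)
  have "(\<Sum>x\<in>F. cmod (cut_kernel A (avg_proj_kernel Xs) B x y) / schur_weight e B x)
      = (\<Sum>x\<in>F. cmod (cut_kernel A (avg_proj_kernel Xs) B x y)) / schur_weight e B y"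
    unfolding sum_divide_distrib by (intro sum.cong refl same_weight)
  also have "\<dots> \<le> (if y \<in> B then a / N else 0) / schur_weight e B y"
    using col_sum_cut_avg_proj_kernel_le[of A B y F] schur_weight_pos[OF assms(1), of B y]
    by (intro divide_right_mono) (auto simp: a_def N_def)
  also have "\<dots> \<le> e"
  proof (cases "y \<in> B")
    case True
    then have "y \<in> B \<inter> Xs (block y)"
      using in_block_iff by blast
    then have "1 \<le> b"
      using finite_block by (simp add: b_def Suc_le_eq card_gt_0_iff) blast
    then have "a / N / schur_weight e B y = a * b / (e * N\<^sup>2)"
      using \<open>0 < N\<close> assms(1) by (simp add: schur_weight_def N_def b_def power2_eq_square field_simps)
    also have "\<dots> \<le> (e * N)\<^sup>2 / (e * N\<^sup>2)"
      using small assms(1) by (intro divide_right_mono) (auto simp: a_def b_def N_def)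
    also have "\<dots> = e"
      using \<open>0 < N\<close> assms(1) by (simp add: power2_eq_square)
    finally show ?thesis
      using True by simp
  qed (use assms(1) in simp)
  finally show ?thesis .
qed

lemma cut_avg_proj_kernel_form_le:
  assumes "0 < e"
    and "\<And>n. real (card (A \<inter> Xs n)) * real (card (B \<inter> Xs n)) \<le> (e * real (card (Xs n)))\<^sup>2"
    and "in_l2_ball F f" "in_l2_ball F g"
  shows "cmod (kernel_form (cut_kernel A (avg_proj_kernel Xs) B) F f g) \<le> e"
  using assms
  by (intro kernel_form_schur_test[where t = "schur_weight e B"] schur_weight_pos
      schur_weight_mult_row_sum_le col_sum_div_schur_weight_le)

lemma kernel_norm_cut_avg_proj_kernel_le:
  assumes "0 < e"
    and "\<And>n. real (card (A \<inter> Xs n)) * real (card (B \<inter> Xs n)) \<le> (e * real (card (Xs n)))\<^sup>2"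
  shows "kernel_norm (cut_kernel A (avg_proj_kernel Xs) B) \<le> e"
  using assms by (intro kernel_norm_le cut_avg_proj_kernel_form_le)

lemma kernel_form_cut_avg_proj_kernel_indicators:
  "kernel_form (cut_kernel A (avg_proj_kernel Xs) B) (Xs n)
      (\<lambda>x. complex_of_real (indicator (A \<inter> Xs n) x / s))
      (\<lambda>y. complex_of_real (indicator (B \<inter> Xs n) y / t))
    = complex_of_real (real (card (A \<inter> Xs n)) * real (card (B \<inter> Xs n)) / (s * t * real (card (Xs n))))"
proof -
  have "kernel_form (cut_kernel A (avg_proj_kernel Xs) B) (Xs n)
      (\<lambda>x. complex_of_real (indicator (A \<inter> Xs n) x / s))
      (\<lambda>y. complex_of_real (indicator (B \<inter> Xs n) y / t))
    = complex_of_real ((\<Sum>x\<in>Xs n. indicator (A \<inter> Xs n) x)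
        * (\<Sum>y\<in>Xs n. indicator (B \<inter> Xs n) y) / (s * t * real (card (Xs n))))"
    unfolding kernel_form_def sum_product sum_divide_distrib of_real_sum
    by (intro sum.cong refl) (auto simp: cut_kernel_def avg_proj_kernel_eq block_eq indicator_def)
  moreover have "(\<Sum>x\<in>Xs n. indicator (S \<inter> Xs n) x) = real (card (S \<inter> Xs n))" for S
    using finite_block[of n] by (simp add: sum_indicator_real Int_absorb1)
  ultimately show ?thesis
    by simp
qed

lemma card_mult_card_le_if_kernel_norm_cut_avg_proj_kernel_le:
  assumes norm_le: "kernel_norm (cut_kernel A (avg_proj_kernel Xs) B) \<le> e"
  shows "real (card (A \<inter> Xs n)) * real (card (B \<inter> Xs n)) \<le> (e * real (card (Xs n)))\<^sup>2"
proof (cases "A \<inter> Xs n = {} \<or> B \<inter> Xs n = {}")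
  case False
  define N where "N = real (card (Xs n))"
  define a where "a = real (card (A \<inter> Xs n))"
  define b where "b = real (card (B \<inter> Xs n))"
  have pos: "0 < N" "0 < a" "0 < b"
    using False finite_block card_block_pos by (auto simp: N_def a_def b_def card_gt_0_iff)
  define f where "f x = complex_of_real (indicator (A \<inter> Xs n) x / sqrt a)" for x
  define g where "g y = complex_of_real (indicator (B \<inter> Xs n) y / sqrt b)" for y
  have "in_l2_ball (Xs n) f" "in_l2_ball (Xs n) g"
    unfolding f_def g_def a_def b_def using False finite_block
    by (auto intro!: in_l2_ball_normalized_indicator simp del: of_real_divide)
  moreover have "cmod (kernel_form (cut_kernel A (avg_proj_kernel Xs) B) F f' g') \<le> 1"
    if "finite F" "in_l2_ball F f'" "in_l2_ball F g'" for F f' g'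
  proof (rule cut_avg_proj_kernel_form_le)
    show "real (card (A \<inter> Xs m)) * real (card (B \<inter> Xs m)) \<le> (1 * real (card (Xs m)))\<^sup>2" for m
      using finite_block by (simp add: power2_eq_square mult_mono card_mono)
  qed (use that in simp_all)
  ultimately have "cmod (kernel_form (cut_kernel A (avg_proj_kernel Xs) B) (Xs n) f g)
      \<le> kernel_norm (cut_kernel A (avg_proj_kernel Xs) B)"
    using finite_block by (intro kernel_form_le_kernel_norm)
  then have "cmod (kernel_form (cut_kernel A (avg_proj_kernel Xs) B) (Xs n) f g) \<le> e"
    using norm_le by linarith
  moreover have "cmod (kernel_form (cut_kernel A (avg_proj_kernel Xs) B) (Xs n) f g)
      = a * b / (sqrt a * sqrt b * N)"
    unfolding f_def g_def kernel_form_cut_avg_proj_kernel_indicators norm_of_real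
    by (simp add: a_def b_def N_def abs_of_nonneg)
  moreover have "a * b / (sqrt a * sqrt b * N) = sqrt a * sqrt b / N"
    using pos by (simp add: real_div_sqrt flip: times_divide_times_eq)
  ultimately have "sqrt a * sqrt b / N \<le> e"
    by linarith
  then have "sqrt a * sqrt b \<le> e * N"
    using pos by (simp add: pos_divide_le_eq)
  then have "(sqrt a * sqrt b)\<^sup>2 \<le> (e * N)\<^sup>2"
    using pos by (intro power_mono) auto
  then show ?thesis
    using pos by (simp add: power_mult_distrib a_def b_def N_def)
qed auto

lemma quasi_local_avg_proj_kernel_iff:
  "quasi_local (avg_proj_kernel Xs) \<longleftrightarrow>
     (\<forall>e>0. \<exists>R>0. \<forall>n A B. A \<subseteq> Xs n \<and> B \<subseteq> Xs n \<and> R \<le> setdist A B \<longrightarrow>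
        real (card A) * real (card B) \<le> (e * real (card (Xs n)))\<^sup>2)"
  (is "_ \<longleftrightarrow> (\<forall>e>0. \<exists>R>0. ?blockwise e R)")
proof -
  have to_blockwise: "?blockwise e R"
    if norm_le: "\<forall>A B. R \<le> setdist A B \<longrightarrow> kernel_norm (cut_kernel A (avg_proj_kernel Xs) B) \<le> e"
    for e R
  proof (intro allI impI)
    fix n A B
    assume "A \<subseteq> Xs n \<and> B \<subseteq> Xs n \<and> R \<le> setdist A B"
    then have "A \<inter> Xs n = A" "B \<inter> Xs n = B" "kernel_norm (cut_kernel A (avg_proj_kernel Xs) B) \<le> e"
      using norm_le by auto
    then show "real (card A) * real (card B) \<le> (e * real (card (Xs n)))\<^sup>2"
      using card_mult_card_le_if_kernel_norm_cut_avg_proj_kernel_le[of A B e n] by simp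
  qed
  have from_blockwise: "kernel_norm (cut_kernel A (avg_proj_kernel Xs) B) \<le> e"
    if "0 < e" "?blockwise e R" "R \<le> setdist A B" for e R A B
  proof (rule kernel_norm_cut_avg_proj_kernel_le[OF \<open>0 < e\<close>])
    fix n
    show "real (card (A \<inter> Xs n)) * real (card (B \<inter> Xs n)) \<le> (e * real (card (Xs n)))\<^sup>2"
    proof (cases "A \<inter> Xs n = {} \<or> B \<inter> Xs n = {}")
      case False
      then have "R \<le> setdist (A \<inter> Xs n) (B \<inter> Xs n)"
        using setdist_le_setdist_subsets[of "A \<inter> Xs n" "B \<inter> Xs n" A B] that(3) by auto
      then show ?thesis
        using that(2)[rule_format, of "A \<inter> Xs n" n "B \<inter> Xs n"] by simp
    qed auto
  qed
  show ?thesis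
    unfolding quasi_local_def
  proof (intro iffI allI impI)
    fix e :: real
    assume "\<forall>\<epsilon>>0. \<exists>R>0. \<forall>A B. R \<le> setdist A B \<longrightarrow>
        kernel_norm (cut_kernel A (avg_proj_kernel Xs) B) \<le> \<epsilon>" and "0 < e"
    then obtain R where "0 < R"
      and "\<forall>A B. R \<le> setdist A B \<longrightarrow> kernel_norm (cut_kernel A (avg_proj_kernel Xs) B) \<le> e"
      by auto
    then show "\<exists>R>0. ?blockwise e R"
      by (intro exI[of _ R] conjI to_blockwise)
  next
    fix e :: real
    assume "\<forall>e>0. \<exists>R>0. ?blockwise e R" and "0 < e"
    then obtain R where "0 < R" "?blockwise e R"
      by auto
    then show "\<exists>R>0. \<forall>A B. R \<le> setdist A B \<longrightarrow> kernel_norm (cut_kernel A (avg_proj_kernel Xs) B) \<le> e"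
      using from_blockwise[OF \<open>0 < e\<close>] by auto
  qed
qed

lemma quasi_local_imp_boundary_expanding:
  assumes ql: "quasi_local (avg_proj_kernel Xs)" and "0 < \<alpha>" "0 \<le> c" "c < 1"
  shows "\<exists>R>0. \<forall>n. boundary_expanding (Xs n) \<alpha> c R"
proof -
  define e where "e = sqrt (\<alpha> * (1 - c) / 4)"
  have "0 < e" and e_sq: "e\<^sup>2 = \<alpha> * (1 - c) / 4"
    using assms by (simp_all add: e_def)
  then obtain R where "0 < R" and R: "\<forall>n A B. A \<subseteq> Xs n \<and> B \<subseteq> Xs n \<and> R \<le> setdist A B \<longrightarrow>
      real (card A) * real (card B) \<le> (e * real (card (Xs n)))\<^sup>2"
    using ql unfolding quasi_local_avg_proj_kernel_iff by blast
  have "boundary_expanding (Xs n) \<alpha> c R" for n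
    using finite_block block_nonempty assms(2-4) \<open>0 < R\<close> R
    by (intro boundary_expanding_if_far_sets_small) (auto simp: power_mult_distrib e_sq)
  then show ?thesis
    using \<open>0 < R\<close> by blast
qed

lemma boundary_expanding_imp_quasi_local:
  assumes expanding: "\<And>\<alpha>. 0 < \<alpha> \<Longrightarrow> \<alpha> \<le> 1/2 \<Longrightarrow>
    \<exists>c R. 0 < c \<and> c < 1 \<and> 0 < R \<and> (\<forall>n. boundary_expanding (Xs n) \<alpha> c R)"
  shows "quasi_local (avg_proj_kernel Xs)"
  unfolding quasi_local_avg_proj_kernel_iff
proof (intro allI impI)
  fix e :: real
  assume "0 < e"
  define \<alpha> where "\<alpha> = min (e\<^sup>2) (1/2)"
  have "0 < \<alpha>" "\<alpha> \<le> 1/2" "\<alpha> \<le> e\<^sup>2"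
    using \<open>0 < e\<close> by (auto simp: \<alpha>_def)
  then obtain c R where "0 < c" "0 < R" and exp: "\<And>n. boundary_expanding (Xs n) \<alpha> c R"
    using expanding by blast
  obtain k where k: "1 / \<alpha> < (1 + c) ^ k"
    using real_arch_pow[of "1 + c" "1 / \<alpha>"] \<open>0 < c\<close> by auto
  show "\<exists>R'>0. \<forall>n A B. A \<subseteq> Xs n \<and> B \<subseteq> Xs n \<and> R' \<le> setdist A B \<longrightarrow>
      real (card A) * real (card B) \<le> (e * real (card (Xs n)))\<^sup>2"
  proof (intro exI[of _ "2 * (real k * R) + 1"] conjI allI impI)
    show "0 < 2 * (real k * R) + 1"
      using \<open>0 < R\<close> by (simp add: add_nonneg_pos)
    fix n A B
    assume AB: "A \<subseteq> Xs n \<and> B \<subseteq> Xs n \<and> 2 * (real k * R) + 1 \<le> setdist A B"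
    then have "real (card A) * real (card B) \<le> \<alpha> * (real (card (Xs n)))\<^sup>2"
      using \<open>0 < \<alpha>\<close> \<open>0 < c\<close> \<open>0 < R\<close> exp k finite_block
      by (intro card_mult_card_le_if_far_apart[where R = R and k = k]) auto
    also have "\<dots> \<le> (e * real (card (Xs n)))\<^sup>2"
      using \<open>\<alpha> \<le> e\<^sup>2\<close> by (simp add: power_mult_distrib mult_right_mono)
    finally show "real (card A) * real (card B) \<le> (e * real (card (Xs n)))\<^sup>2" .
  qed
qed

end

theorem theorem3p10:
  fixes Xs :: "nat \<Rightarrow> 'a::metric_space set"
  assumes "coarse_disjoint_union Xs"
    and "filterlim (\<lambda>n. card (Xs n)) at_top sequentially"
  shows "(quasi_local (avg_proj_kernel Xs) \<longleftrightarrow>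
           (\<forall>\<alpha> c. 0 < \<alpha> \<and> \<alpha> \<le> 1/2 \<and> 0 < c \<and> c < 1 \<longrightarrow>
              (\<exists>R>0. \<forall>n A. A \<subseteq> Xs n \<and> \<alpha> * real (card (Xs n)) \<le> real (card A)
                     \<and> real (card A) \<le> real (card (Xs n)) / 2
                     \<longrightarrow> real (card (outer_boundary (Xs n) R A)) > c * real (card A))))
       \<and> ((\<forall>\<alpha> c. 0 < \<alpha> \<and> \<alpha> \<le> 1/2 \<and> 0 < c \<and> c < 1 \<longrightarrow>
              (\<exists>R>0. \<forall>n A. A \<subseteq> Xs n \<and> \<alpha> * real (card (Xs n)) \<le> real (card A)
                     \<and> real (card A) \<le> real (card (Xs n)) / 2
                     \<longrightarrow> real (card (outer_boundary (Xs n) R A)) > c * real (card A)))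
          \<longleftrightarrow>
           (\<forall>\<alpha>. 0 < \<alpha> \<and> \<alpha> \<le> 1/2 \<longrightarrow>
              (\<exists>c R. 0 < c \<and> c < 1 \<and> 0 < R \<and> (\<forall>n A. A \<subseteq> Xs n \<and> \<alpha> * real (card (Xs n)) \<le> real (card A)
                     \<and> real (card A) \<le> real (card (Xs n)) / 2
                     \<longrightarrow> real (card (outer_boundary (Xs n) R A)) > c * real (card A)))))"
proof -
  interpret finite_block_partition Xs
    using assms(1) unfolding coarse_disjoint_union_def by unfold_locales auto
  have expanding_iff: "(\<forall>n A. A \<subseteq> Xs n \<and> \<alpha> * real (card (Xs n)) \<le> real (card A)
      \<and> real (card A) \<le> real (card (Xs n)) / 2
      \<longrightarrow> real (card (outer_boundary (Xs n) R A)) > c * real (card A))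
    \<longleftrightarrow> (\<forall>n. boundary_expanding (Xs n) \<alpha> c R)" for \<alpha> c R
    by (simp add: boundary_expanding_def)
  have ql_expanding: "\<forall>\<alpha> c. 0 < \<alpha> \<and> \<alpha> \<le> 1/2 \<and> 0 < c \<and> c < 1 \<longrightarrow>
      (\<exists>R>0. \<forall>n. boundary_expanding (Xs n) \<alpha> c R)"
    if "quasi_local (avg_proj_kernel Xs)"
    using quasi_local_imp_boundary_expanding[OF that] by auto
  have expanding_half: "\<forall>\<alpha>. 0 < \<alpha> \<and> \<alpha> \<le> 1/2 \<longrightarrow>
      (\<exists>c R. 0 < c \<and> c < 1 \<and> 0 < R \<and> (\<forall>n. boundary_expanding (Xs n) \<alpha> c R))"
    if all_c: "\<forall>\<alpha> c. 0 < \<alpha> \<and> \<alpha> \<le> 1/2 \<and> 0 < c \<and> c < 1 \<longrightarrow>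
      (\<exists>R>0. \<forall>n. boundary_expanding (Xs n) \<alpha> c R)"
  proof (intro allI impI)
    fix \<alpha> :: real
    assume "0 < \<alpha> \<and> \<alpha> \<le> 1/2"
    then obtain R where "0 < R" "\<forall>n. boundary_expanding (Xs n) \<alpha> (1/2) R"
      using all_c[rule_format, of \<alpha> "1/2"] by auto
    then show "\<exists>c R. 0 < c \<and> c < 1 \<and> 0 < R \<and> (\<forall>n. boundary_expanding (Xs n) \<alpha> c R)"
      by (intro exI[of _ "1/2"] exI[of _ R]) simp
  qed
  have expanding_ql: "quasi_local (avg_proj_kernel Xs)"
    if "\<forall>\<alpha>. 0 < \<alpha> \<and> \<alpha> \<le> 1/2 \<longrightarrow>
      (\<exists>c R. 0 < c \<and> c < 1 \<and> 0 < R \<and> (\<forall>n. boundary_expanding (Xs n) \<alpha> c R))"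
    using that by (intro boundary_expanding_imp_quasi_local) auto
  show ?thesis
    unfolding expanding_iff using ql_expanding expanding_half expanding_ql by blast
qed

end
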